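(* Let $X=(X_1,\ldots,X_q)^T$ be a vector of mutually independent Poisson random variables with means $\lambda=(\lambda_1,\ldots,\lambda_q)^T$. Let $A=(a_{i,j}) \in \{0,1\}^{\ell\times q}$ have pairwise distinct nonzero columns and let $Y = AX$, with cumulant generating function $K_Y(t)=\log E[e^{t^TY}]$. Let $\mathcal B_0 = \{0,1\}^\ell\setminus\{0\}$ with the componentwise order $\le$ (and $<$ meaning $\le$ and $\neq$), let $\mathcal A\subseteq\mathcal B_0$ be the set of columns of $A$, and let $\rho:\mathcal B_0\to\mathbb{R}$ be $\rho(a_{*,j})=\lambda_j$ and $\rho(v)=0$ for $v\notin\mathcal A$. For $v\in\mathcal B_0$ with support $\{i_1<\cdots<i_p\}$ let $\phi(v)=\frac{\partial^p}{\partial t_{i_1}\cdots\partial t_{i_p}}K_Y(t)\big|_{t=0}$. Let $\uparrow v=\{w\in\mathcal B_0: v\le w\}$ and define $\psi:\mathcal B_0\to\mathbb{R}$ as the solution of the recurrence \[\psi(v) = \phi(v) - \sum_{w\in \uparrow v\setminus\{v\}}\psi(w)\quad (v\in\mathcal B_0).\] Then $\psi(v)=\rho(v)$ for every $v\in\mathcal B_0$. Moreover, if $\psi(v)\neq 0$, then $v\in\mathcal A$.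
   Context: The recurrence determines $\psi$ uniquely since $\mathcal B_0$ is finite and $\psi(v)$ depends only on values at strictly larger elements. $a_{*,j}$ is the $j$-th column of $A$. *)

theory Defs
  imports "HOL-Probability.Probability"
begin

text \<open>Vectors in R^l (and {0,1}^l) are functions nat => real that vanish outside {..<l}.
  The componentwise order is the pointwise order on functions.\<close>

definition B0 :: "nat \<Rightarrow> (nat \<Rightarrow> real) set" where
  "B0 l = {v. (\<forall>i<l. v i = 0 \<or> v i = 1) \<and> (\<forall>i\<ge>l. v i = 0) \<and> v \<noteq> (\<lambda>_. 0)}"

definition col :: "nat \<Rightarrow> (nat \<Rightarrow> nat \<Rightarrow> real) \<Rightarrow> nat \<Rightarrow> (nat \<Rightarrow> real)" where
  "col l A j = (\<lambda>i. if i < l then A i j else 0)"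

definition col_set :: "nat \<Rightarrow> nat \<Rightarrow> (nat \<Rightarrow> nat \<Rightarrow> real) \<Rightarrow> (nat \<Rightarrow> real) set" where
  "col_set l q A = col l A ` {..<q}"

text \<open>rho(a_{*,j}) = lambda_j, rho(v) = 0 for v not a column (columns are pairwise distinct).\<close>
definition rho :: "nat \<Rightarrow> nat \<Rightarrow> (nat \<Rightarrow> nat \<Rightarrow> real) \<Rightarrow> (nat \<Rightarrow> real) \<Rightarrow> (nat \<Rightarrow> real) \<Rightarrow> real" where
  "rho l q A lam v = (if v \<in> col_set l q A then lam (THE j. j < q \<and> col l A j = v) else 0)"

definition partial :: "nat \<Rightarrow> ((nat \<Rightarrow> real) \<Rightarrow> real) \<Rightarrow> (nat \<Rightarrow> real) \<Rightarrow> real" where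
  "partial i f t = deriv (\<lambda>s. f (t(i := s))) (t i)"

definition mixed_partial :: "nat \<Rightarrow> (nat \<Rightarrow> real) \<Rightarrow> ((nat \<Rightarrow> real) \<Rightarrow> real) \<Rightarrow> (nat \<Rightarrow> real) \<Rightarrow> real" where
  "mixed_partial l v f = foldr partial (sorted_list_of_set {i. i < l \<and> v i \<noteq> 0}) f"

definition cgf_Y :: "'a measure \<Rightarrow> nat \<Rightarrow> nat \<Rightarrow> (nat \<Rightarrow> nat \<Rightarrow> real) \<Rightarrow> (nat \<Rightarrow> 'a \<Rightarrow> nat) \<Rightarrow> (nat \<Rightarrow> real) \<Rightarrow> real" where
  "cgf_Y M l q A X t =
     ln (prob_space.expectation M (\<lambda>\<omega>. exp (\<Sum>i<l. t i * (\<Sum>j<q. A i j * real (X j \<omega>)))))"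

definition phi :: "'a measure \<Rightarrow> nat \<Rightarrow> nat \<Rightarrow> (nat \<Rightarrow> nat \<Rightarrow> real) \<Rightarrow> (nat \<Rightarrow> 'a \<Rightarrow> nat) \<Rightarrow> (nat \<Rightarrow> real) \<Rightarrow> real" where
  "phi M l q A X v = mixed_partial l v (cgf_Y M l q A X) (\<lambda>_. 0)"

end

theory Submission
  imports Defs
begin

text \<open>By independence the moment generating function of \<open>Y = A X\<close> factors into Poisson
  moment generating functions, so \<open>K\<^sub>Y(t) = \<Sum>\<^sub>j \<lambda>\<^sub>j (exp (t \<bullet> a\<^sub>j) - 1)\<close> with \<open>a\<^sub>j\<close> the \<open>j\<close>-th column.
  Differentiating once in each coordinate of the support of \<open>v\<close> multiplies the \<open>j\<close>-th summand
  by the product of the entries of \<open>a\<^sub>j\<close> over that support, which for 0/1 entries is the indicator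
  of \<open>v \<le> a\<^sub>j\<close>. Hence \<open>\<phi>(v)\<close> is the sum of \<open>\<rho>\<close> over \<open>\<up>v\<close>: \<open>\<rho>\<close> solves the same triangular
  recurrence as \<open>\<psi>\<close>, and the two agree by downward induction on the finite poset.\<close>

lemma poisson_pmf_mgf:
  fixes r c :: real
  assumes r: "0 < r"
  shows "integrable (measure_pmf (poisson_pmf r)) (\<lambda>n. exp (c * real n))"
    and "(\<integral>n. exp (c * real n) \<partial>measure_pmf (poisson_pmf r)) = exp (r * (exp c - 1))"
proof -
  define g where "g n = pmf (poisson_pmf r) n * exp (c * real n)" for n
  have g: "g n = (r * exp c) ^ n /\<^sub>R fact n * exp (-r)" for n
    unfolding g_def using r
    by (simp add: power_mult_distrib exp_of_nat_mult[symmetric] field_simps mult.commute)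
  have "(\<lambda>n. (r * exp c) ^ n /\<^sub>R fact n) sums exp (r * exp c)"
    by (rule exp_converges)
  hence g_sums: "g sums (exp (r * exp c) * exp (-r))"
    unfolding g by (rule sums_mult2)
  have "g n \<ge> 0" for n
    unfolding g_def by simp
  with g_sums have g_integrable: "integrable (count_space UNIV) g"
    unfolding integrable_count_space_nat_iff by (simp add: sums_summable)
  show "integrable (measure_pmf (poisson_pmf r)) (\<lambda>n. exp (c * real n))"
    unfolding measure_pmf_eq_density
    by (subst integrable_density) (use g_integrable in \<open>auto simp: g_def[abs_def]\<close>)
  have "(\<integral>n. exp (c * real n) \<partial>measure_pmf (poisson_pmf r)) = (\<integral>n. g n \<partial>count_space UNIV)"
    unfolding measure_pmf_eq_density
    by (subst integral_density) (auto simp: g_def[abs_def])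
  also have "\<dots> = (\<Sum>n. g n)"
    by (rule integral_count_space_nat[OF g_integrable])
  also have "\<dots> = exp (r * (exp c - 1))"
    using sums_unique[OF g_sums] by (simp add: exp_add[symmetric] algebra_simps)
  finally show "(\<integral>n. exp (c * real n) \<partial>measure_pmf (poisson_pmf r)) = exp (r * (exp c - 1))" .
qed

lemma expectation_exp_indep_poisson:
  assumes "prob_space M" and "finite J"
    and lam: "\<And>j. j \<in> J \<Longrightarrow> 0 < lam j"
    and meas: "\<And>j. j \<in> J \<Longrightarrow> X j \<in> measurable M (count_space UNIV)"
    and law: "\<And>j. j \<in> J \<Longrightarrow> distr M (count_space UNIV) (X j) = measure_pmf (poisson_pmf (lam j))"
    and indep: "prob_space.indep_vars M (\<lambda>_. count_space UNIV) X J"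
  shows "prob_space.expectation M (\<lambda>\<omega>. exp (\<Sum>j\<in>J. c j * real (X j \<omega>)))
           = exp (\<Sum>j\<in>J. lam j * (exp (c j) - 1))"
proof -
  interpret prob_space M by fact
  have integrable: "integrable M (\<lambda>\<omega>. exp (c j * real (X j \<omega>)))"
    and integral: "(\<integral>\<omega>. exp (c j * real (X j \<omega>)) \<partial>M) = exp (lam j * (exp (c j) - 1))"
    if j: "j \<in> J" for j
  proof -
    have "integrable (distr M (count_space UNIV) (X j)) (\<lambda>n. exp (c j * real n))"
      using law[OF j] poisson_pmf_mgf(1)[OF lam[OF j]] by simp
    thus "integrable M (\<lambda>\<omega>. exp (c j * real (X j \<omega>)))"
      by (subst (asm) integrable_distr_eq[OF meas[OF j]]) simp_all
    have "(\<integral>\<omega>. exp (c j * real (X j \<omega>)) \<partial>M)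
          = (\<integral>n. exp (c j * real n) \<partial>distr M (count_space UNIV) (X j))"
      by (subst integral_distr[OF meas[OF j]]) simp_all
    also have "\<dots> = exp (lam j * (exp (c j) - 1))"
      using law[OF j] poisson_pmf_mgf(2)[OF lam[OF j]] by simp
    finally show "(\<integral>\<omega>. exp (c j * real (X j \<omega>)) \<partial>M) = exp (lam j * (exp (c j) - 1))" .
  qed
  have "indep_vars (\<lambda>_. borel) (\<lambda>j \<omega>. exp (c j * real (X j \<omega>))) J"
    by (rule indep_vars_compose2[OF indep]) simp
  hence "expectation (\<lambda>\<omega>. \<Prod>j\<in>J. exp (c j * real (X j \<omega>)))
         = (\<Prod>j\<in>J. exp (lam j * (exp (c j) - 1)))"
    by (subst indep_vars_lebesgue_integral) (auto simp: \<open>finite J\<close> integrable integral)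
  thus ?thesis
    by (simp add: exp_sum \<open>finite J\<close>)
qed

definition exp_combination ::
  "nat \<Rightarrow> nat \<Rightarrow> (nat \<Rightarrow> nat \<Rightarrow> real) \<Rightarrow> (nat \<Rightarrow> real) \<Rightarrow> real \<Rightarrow> (nat \<Rightarrow> real) \<Rightarrow> real" where
  "exp_combination l q A d C t = (\<Sum>j<q. d j * exp (\<Sum>i<l. t i * A i j)) - C"

lemma cgf_Y_indep_poisson:
  assumes "prob_space M"
    and "\<And>j. j < q \<Longrightarrow> 0 < lam j"
    and "\<And>j. j < q \<Longrightarrow> X j \<in> measurable M (count_space UNIV)"
    and "\<And>j. j < q \<Longrightarrow> distr M (count_space UNIV) (X j) = measure_pmf (poisson_pmf (lam j))"
    and "prob_space.indep_vars M (\<lambda>_. count_space UNIV) X {..<q}"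
  shows "cgf_Y M l q A X = exp_combination l q A lam (\<Sum>j<q. lam j)"
proof
  fix t
  define c where "c j = (\<Sum>i<l. t i * A i j)" for j
  have "(\<Sum>i<l. t i * (\<Sum>j<q. A i j * real (X j \<omega>))) = (\<Sum>j<q. c j * real (X j \<omega>))" for \<omega>
    unfolding c_def sum_distrib_left sum_distrib_right
    by (subst sum.swap) (simp add: mult.assoc)
  hence "cgf_Y M l q A X t = ln (exp (\<Sum>j<q. lam j * (exp (c j) - 1)))"
    unfolding cgf_Y_def using expectation_exp_indep_poisson[OF assms(1) _ assms(2-5)] by simp
  thus "cgf_Y M l q A X t = exp_combination l q A lam (\<Sum>j<q. lam j) t"
    by (simp add: exp_combination_def c_def right_diff_distrib sum_subtractf)
qed

lemma partial_exp_combination: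
  assumes i: "i < l"
  shows "partial i (exp_combination l q A d C) = exp_combination l q A (\<lambda>j. d j * A i j) 0"
proof
  fix t
  have split: "(\<Sum>k<l. (t(i := s)) k * A k j) = s * A i j + (\<Sum>k\<in>{..<l}-{i}. t k * A k j)" for s j
    using i by (subst sum.remove[of _ i]) auto
  have "((\<lambda>s. exp_combination l q A d C (t(i := s))) has_real_derivative
        (\<Sum>j<q. d j * (exp (t i * A i j + (\<Sum>k\<in>{..<l}-{i}. t k * A k j)) * A i j))) (at (t i))"
    unfolding exp_combination_def split
    by (auto intro!: derivative_eq_intros sum.cong simp: mult_ac)
  moreover have "(\<Sum>j<q. d j * (exp (t i * A i j + (\<Sum>k\<in>{..<l}-{i}. t k * A k j)) * A i j))
                 = exp_combination l q A (\<lambda>j. d j * A i j) 0 t"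
    unfolding exp_combination_def using split[of "t i"] by (simp add: mult_ac)
  ultimately show "partial i (exp_combination l q A d C) t = exp_combination l q A (\<lambda>j. d j * A i j) 0 t"
    unfolding partial_def by (simp add: DERIV_imp_deriv)
qed

lemma foldr_partial_exp_combination:
  assumes "\<forall>i\<in>set is. i < l"
  shows "foldr partial is (exp_combination l q A d C) =
         exp_combination l q A (\<lambda>j. d j * prod_list (map (\<lambda>i. A i j) is)) (if is = [] then C else 0)"
  using assms by (induction "is") (simp_all add: partial_exp_combination mult_ac)

lemma mixed_partial_exp_combination:
  assumes "{i. i < l \<and> v i \<noteq> 0} \<noteq> {}"
  shows "mixed_partial l v (exp_combination l q A d C) (\<lambda>_. 0)
           = (\<Sum>j<q. d j * (\<Prod>i | i < l \<and> v i \<noteq> 0. A i j))"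
proof -
  define S where "S = {i. i < l \<and> v i \<noteq> 0}"
  have "finite S" unfolding S_def by auto
  hence "sorted_list_of_set S \<noteq> []" and "\<forall>i\<in>set (sorted_list_of_set S). i < l"
    using assms unfolding S_def by auto
  moreover have "prod_list (map g (sorted_list_of_set S)) = prod g S" for g :: "nat \<Rightarrow> real"
    using prod.distinct_set_conv_list[of "sorted_list_of_set S" g] \<open>finite S\<close> by simp
  ultimately show ?thesis
    unfolding mixed_partial_def S_def[symmetric]
    by (simp add: foldr_partial_exp_combination exp_combination_def)
qed

lemma finite_B0: "finite (B0 l)"
proof (rule finite_subset)
  let ?F = "{f. \<forall>x. (x \<in> {..<l} \<longrightarrow> f x \<in> {0, 1}) \<and> (x \<notin> {..<l} \<longrightarrow> f x = (0::real))}"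
  show "B0 l \<subseteq> ?F"
    unfolding B0_def by auto
  show "finite ?F"
    by (rule finite_set_of_finite_funs) auto
qed

lemma support_B0_nonempty:
  assumes "v \<in> B0 l"
  shows "{i. i < l \<and> v i \<noteq> 0} \<noteq> {}"
  using assms unfolding B0_def by (auto simp: fun_eq_iff not_less)

lemma col_in_B0:
  assumes "\<And>i. i < l \<Longrightarrow> A i j = 0 \<or> A i j = 1" and "col l A j \<noteq> (\<lambda>_. 0)"
  shows "col l A j \<in> B0 l"
  using assms unfolding B0_def col_def by auto

lemma prod_support_col:
  assumes v: "v \<in> B0 l" and A01: "\<And>i. i < l \<Longrightarrow> A i j = 0 \<or> A i j = 1"
  shows "(\<Prod>i | i < l \<and> v i \<noteq> 0. A i j) = (if v \<le> col l A j then 1 else 0)"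
proof (cases "v \<le> col l A j")
  case True
  have "A i j = 1" if "i < l" "v i \<noteq> 0" for i
  proof -
    have "v i = 1"
      using v that unfolding B0_def by auto
    moreover have "v i \<le> col l A j i"
      using True by (simp add: le_fun_def)
    ultimately show ?thesis
      using A01[OF \<open>i < l\<close>] \<open>i < l\<close> by (auto simp: col_def)
  qed
  thus ?thesis
    using True by simp
next
  case False
  then obtain i where i: "\<not> v i \<le> col l A j i"
    by (auto simp: le_fun_def)
  with v have "i < l"
    unfolding B0_def col_def by (cases "i < l") auto
  with i v A01[OF \<open>i < l\<close>] have "A i j = 0" "v i \<noteq> 0"
    unfolding B0_def col_def by auto
  thus ?thesis
    using False \<open>i < l\<close> by (intro trans[OF prod_zero]) auto
qed

lemma phi_indep_poisson:
  assumes "prob_space M"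
    and "\<And>j. j < q \<Longrightarrow> 0 < lam j"
    and "\<And>j. j < q \<Longrightarrow> X j \<in> measurable M (count_space UNIV)"
    and "\<And>j. j < q \<Longrightarrow> distr M (count_space UNIV) (X j) = measure_pmf (poisson_pmf (lam j))"
    and "prob_space.indep_vars M (\<lambda>_. count_space UNIV) X {..<q}"
    and A01: "\<And>i j. i < l \<Longrightarrow> j < q \<Longrightarrow> A i j = 0 \<or> A i j = 1"
    and v: "v \<in> B0 l"
  shows "phi M l q A X v = (\<Sum>j | j < q \<and> v \<le> col l A j. lam j)"
proof -
  have "cgf_Y M l q A X = exp_combination l q A lam (\<Sum>j<q. lam j)"
    using assms(1-5) by (rule cgf_Y_indep_poisson)
  hence "phi M l q A X v = (\<Sum>j<q. lam j * (\<Prod>i | i < l \<and> v i \<noteq> 0. A i j))"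
    unfolding phi_def using mixed_partial_exp_combination[OF support_B0_nonempty[OF v]] by simp
  also have "\<dots> = (\<Sum>j<q. if v \<le> col l A j then lam j else 0)"
    by (intro sum.cong refl) (simp add: prod_support_col[OF v] A01)
  also have "\<dots> = (\<Sum>j | j < q \<and> v \<le> col l A j. lam j)"
    by (simp add: sum.inter_filter[symmetric] lessThan_def Collect_conj_eq[symmetric])
  finally show ?thesis .
qed

lemma rho_col:
  assumes "j < q" and distinct: "\<And>j k. j < q \<Longrightarrow> k < q \<Longrightarrow> j \<noteq> k \<Longrightarrow> col l A j \<noteq> col l A k"
  shows "rho l q A lam (col l A j) = lam j"
proof -
  have "(THE k. k < q \<and> col l A k = col l A j) = j"
    using assms by (intro the_equality) auto
  thus ?thesis
    using \<open>j < q\<close> unfolding rho_def col_set_def by auto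
qed

lemma sum_rho_above:
  assumes A01: "\<And>i j. i < l \<Longrightarrow> j < q \<Longrightarrow> A i j = 0 \<or> A i j = 1"
    and nonzero: "\<And>j. j < q \<Longrightarrow> col l A j \<noteq> (\<lambda>_. 0)"
    and distinct: "\<And>j k. j < q \<Longrightarrow> k < q \<Longrightarrow> j \<noteq> k \<Longrightarrow> col l A j \<noteq> col l A k"
  shows "(\<Sum>w | w \<in> B0 l \<and> v \<le> w. rho l q A lam w) = (\<Sum>j | j < q \<and> v \<le> col l A j. lam j)"
proof -
  let ?J = "{j. j < q \<and> v \<le> col l A j}"
  have "inj_on (col l A) ?J"
    using distinct by (auto simp: inj_on_def)
  hence "(\<Sum>w\<in>col l A ` ?J. rho l q A lam w) = (\<Sum>j\<in>?J. lam j)"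
    by (simp add: sum.reindex rho_col[OF _ distinct])
  moreover have "(\<Sum>w\<in>col l A ` ?J. rho l q A lam w) = (\<Sum>w | w \<in> B0 l \<and> v \<le> w. rho l q A lam w)"
  proof (rule sum.mono_neutral_left)
    show "finite {w. w \<in> B0 l \<and> v \<le> w}"
      using finite_B0 by auto
    show "col l A ` ?J \<subseteq> {w. w \<in> B0 l \<and> v \<le> w}"
      using col_in_B0 A01 nonzero by auto
    show "\<forall>w\<in>{w. w \<in> B0 l \<and> v \<le> w} - col l A ` ?J. rho l q A lam w = 0"
      unfolding rho_def col_set_def by auto
  qed
  ultimately show ?thesis
    by simp
qed

lemma upward_recurrence_unique:
  fixes f g h :: "'a::order \<Rightarrow> 'b::ab_group_add"
  assumes "finite B"
    and recurrence: "\<And>v. v \<in> B \<Longrightarrow> f v = g v - (\<Sum>w | w \<in> B \<and> v < w. f w)"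
    and upward_sum: "\<And>v. v \<in> B \<Longrightarrow> g v = (\<Sum>w | w \<in> B \<and> v \<le> w. h w)"
  shows "v \<in> B \<Longrightarrow> f v = h v"
proof (induction v rule: measure_induct_rule[where f = "\<lambda>v. card {w \<in> B. v < w}"])
  case (less v)
  have above: "f w = h w" if "w \<in> B" "v < w" for w
  proof -
    have "{u \<in> B. w < u} \<subset> {u \<in> B. v < u}"
      using that less_trans by auto
    hence "card {u \<in> B. w < u} < card {u \<in> B. v < u}"
      using \<open>finite B\<close> by (intro psubset_card_mono) auto
    thus ?thesis
      using less.IH that(1) by blast
  qed
  have "{w. w \<in> B \<and> v \<le> w} = insert v {w. w \<in> B \<and> v < w}"
    using less.prems by (auto simp: order.order_iff_strict)
  hence "g v = h v + (\<Sum>w | w \<in> B \<and> v < w. h w)"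
    using upward_sum[OF less.prems] \<open>finite B\<close> by simp
  thus ?case
    using recurrence[OF less.prems] above by simp
qed

theorem proposition5:
  fixes M :: "'a measure" and l q :: nat and A :: "nat \<Rightarrow> nat \<Rightarrow> real"
    and X :: "nat \<Rightarrow> 'a \<Rightarrow> nat" and lam :: "nat \<Rightarrow> real" and psi :: "(nat \<Rightarrow> real) \<Rightarrow> real"
  assumes "prob_space M"
    and "\<And>j. j < q \<Longrightarrow> lam j > 0"
    and "\<And>j. j < q \<Longrightarrow> X j \<in> measurable M (count_space UNIV)"
    and "\<And>j. j < q \<Longrightarrow> distr M (count_space UNIV) (X j) = measure_pmf (poisson_pmf (lam j))"
    and "prob_space.indep_vars M (\<lambda>_. count_space UNIV) X {..<q}"
    and "\<And>i j. i < l \<Longrightarrow> j < q \<Longrightarrow> A i j = 0 \<or> A i j = 1"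
    and "\<And>j. j < q \<Longrightarrow> col l A j \<noteq> (\<lambda>_. 0)"
    and "\<And>j k. j < q \<Longrightarrow> k < q \<Longrightarrow> j \<noteq> k \<Longrightarrow> col l A j \<noteq> col l A k"
    and "\<And>v. v \<in> B0 l \<Longrightarrow>
           psi v = phi M l q A X v - (\<Sum>w\<in>{w \<in> B0 l. v \<le> w \<and> w \<noteq> v}. psi w)"
  shows "(\<forall>v \<in> B0 l. psi v = rho l q A lam v) \<and>
         (\<forall>v \<in> B0 l. psi v \<noteq> 0 \<longrightarrow> v \<in> col_set l q A)"
proof -
  have recurrence: "psi v = phi M l q A X v - (\<Sum>w | w \<in> B0 l \<and> v < w. psi w)"
    if "v \<in> B0 l" for v
  proof -
    have "{w \<in> B0 l. v \<le> w \<and> w \<noteq> v} = {w. w \<in> B0 l \<and> v < w}"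
      by (auto simp: less_le)
    thus ?thesis
      using assms(9)[OF that] by simp
  qed
  have phi_sum_rho: "phi M l q A X v = (\<Sum>w | w \<in> B0 l \<and> v \<le> w. rho l q A lam w)"
    if "v \<in> B0 l" for v
  proof -
    have "phi M l q A X v = (\<Sum>j | j < q \<and> v \<le> col l A j. lam j)"
      using assms(1-6) that by (rule phi_indep_poisson)
    also have "\<dots> = (\<Sum>w | w \<in> B0 l \<and> v \<le> w. rho l q A lam w)"
      using assms(6-8) by (rule sum_rho_above[symmetric])
    finally show ?thesis .
  qed
  have "\<forall>v \<in> B0 l. psi v = rho l q A lam v"
    using upward_recurrence_unique[OF finite_B0 recurrence phi_sum_rho] by blast
  moreover have "rho l q A lam v \<noteq> 0 \<Longrightarrow> v \<in> col_set l q A" for v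
    unfolding rho_def by (auto split: if_splits)
  ultimately show ?thesis
    by auto
qed

end
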